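(* Let $p$ be a prime and $k$ a positive integer. Then $$\Psi_{p^k}(x)\equiv (x^2+4)^{\varphi(p^k)/2}\pmod p,$$ i.e., the congruence holds coefficientwise in $\mathbb{Z}[x]$ (for $p=2$ and $k=1$ this is to be read as $\Psi_2(x)=x$, the square root of $x^2+4\equiv x^2 \pmod 2$).
   Context: The Fibonacci polynomials are defined by $F_1(x)=1$, $F_2(x)=x$, and $F_n(x)=xF_{n-1}(x)+F_{n-2}(x)$ for $n\geq 3$. For $n\geq 2$, the $n$-th fibotomic polynomial $\Psi_n(x)\in\mathbb{Z}[x]$ is the product of the monic irreducible factors of $F_n(x)$ which are not factors of $F_k(x)$ for any $k<n$; also $\Psi_1(x)=1$. $\varphi$ is Euler's totient function. *)

theory Defs
  imports "HOL-Computational_Algebra.Computational_Algebra" "HOL-Number_Theory.Totient" "HOL-Number_Theory.Cong"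
begin

fun fib_poly :: "nat \<Rightarrow> int poly" where
  "fib_poly 0 = 0"
| "fib_poly (Suc 0) = 1"
| "fib_poly (Suc (Suc n)) = [:0, 1:] * fib_poly (Suc n) + fib_poly n"

definition fibotomic :: "nat \<Rightarrow> int poly" where
  "fibotomic n = (if n \<le> 1 then 1 else
     \<Prod>{q :: int poly. irreducible q \<and> lead_coeff q = 1 \<and> q dvd fib_poly n \<and>
                       (\<forall>k. 1 \<le> k \<and> k < n \<longrightarrow> \<not> q dvd fib_poly k)})"

end

theory Submission
  imports Defs
begin

text \<open>Since Fibonacci polynomials are squarefree and a prime factor common to \<open>F m\<close> and
  \<open>F n\<close> divides \<open>F (gcd m n)\<close>, \<open>\<Psi>(p^k)\<close> is the cofactor \<open>F(p^k) / F(p^(k-1))\<close>.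
  For odd \<open>p\<close>, the Binet formula in \<open>\<int>[x][\<surd>(x\<^sup>2 + 4)]\<close> and the Frobenius congruence
  \<open>(a + b)^p \<equiv> a^p + b^p (mod p)\<close> give \<open>F(p^j) \<equiv> (x\<^sup>2 + 4)^((p^j - 1)/2) (mod p)\<close>;
  dividing the congruences for \<open>j = k\<close> and \<open>j = k - 1\<close> leaves the exponent \<open>\<phi>(p^k)/2\<close>.
  For \<open>p = 2\<close>, the doubling formula \<open>F(2m) \<equiv> x F(m)\<^sup>2 (mod 2)\<close> gives
  \<open>F(2^j) \<equiv> x^(2^j - 1) (mod 2)\<close>, while \<open>x\<^sup>2 + 4 \<equiv> x\<^sup>2 (mod 2)\<close>.\<close>

lemma fib_poly_Suc_Suc: "fib_poly (n + 2) = [:0, 1:] * fib_poly (n + 1) + fib_poly n"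
  by (simp add: numeral_2_eq_2)

lemma fib_poly_add: "fib_poly (m + n + 1) = fib_poly (m + 1) * fib_poly (n + 1) + fib_poly m * fib_poly n"
proof (induction m arbitrary: n)
  case (Suc m)
  have "fib_poly (Suc m + n + 1) = fib_poly (m + 1) * fib_poly (n + 2) + fib_poly m * fib_poly (n + 1)"
    using Suc[of "n + 1"] by simp
  also have "\<dots> = fib_poly (m + 2) * fib_poly (n + 1) + fib_poly (m + 1) * fib_poly n"
    by (simp add: fib_poly_Suc_Suc algebra_simps)
  finally show ?case by simp
qed simp

lemma fib_poly_cassini: "fib_poly (n + 1) ^ 2 - fib_poly (n + 2) * fib_poly n = (-1) ^ n"
proof (induction n)
  case (Suc n)
  have "fib_poly (n + 2) ^ 2 - fib_poly (n + 3) * fib_poly (n + 1)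
      = fib_poly (n + 2) * fib_poly n - fib_poly (n + 1) ^ 2"
    using fib_poly_Suc_Suc[of n] fib_poly_Suc_Suc[of "Suc n"]
    by (simp add: numeral_3_eq_3 algebra_simps power2_eq_square)
  then show ?case using Suc by (simp add: numeral_3_eq_3)
qed simp

lemma coprime_fib_poly_Suc: "coprime (fib_poly (n + 1)) (fib_poly n)"
proof (rule coprimeI)
  fix q assume "q dvd fib_poly (n + 1)" and "q dvd fib_poly n"
  then have "q dvd fib_poly (n + 1) ^ 2 - fib_poly (n + 2) * fib_poly n"
    by (simp add: power2_eq_square)
  then have "q dvd (-1) ^ n" by (simp only: fib_poly_cassini)
  then show "is_unit q" by (simp add: is_unit_power_iff dvd_unit_imp_unit)
qed

lemma degree_lead_coeff_fib_poly: "degree (fib_poly (n + 1)) = n \<and> lead_coeff (fib_poly (n + 1)) = 1"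
proof (induction n rule: less_induct)
  case (less n)
  consider "n \<le> 1" | m where "n = m + 2"
    by (metis le_add_diff_inverse2 nat_le_linear not_less_eq_eq numeral_2_eq_2 One_nat_def)
  then show ?case
  proof cases
    case 1
    then show ?thesis by (cases n) auto
  next
    case 2
    let ?G = "fib_poly (m + 2)" and ?H = "fib_poly (m + 1)"
    have "m + 1 < n" "m < n" using 2 by simp_all
    then have G: "degree ?G = m + 1" "lead_coeff ?G = 1" and H: "degree ?H = m"
      using less[of "m + 1"] less[of m] unfolding add.assoc one_add_one by blast+
    then have "?G \<noteq> 0" by auto
    then have xG: "degree ([:0, 1:] * ?G) = m + 2" "coeff ([:0, 1:] * ?G) (m + 2) = 1"
      using G by (simp_all add: degree_mult_eq mult_pCons_left)
    have "fib_poly (n + 1) = [:0, 1:] * ?G + ?H"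
      using 2 fib_poly_Suc_Suc[of "m + 1"] by (simp add: add.assoc)
    moreover have "coeff ?H (m + 2) = 0" using H by (simp add: coeff_eq_0)
    ultimately show ?thesis
      using xG H 2 by (simp add: degree_add_eq_left)
  qed
qed

lemma lead_coeff_fib_poly: "n \<ge> 1 \<Longrightarrow> lead_coeff (fib_poly n) = 1"
  using degree_lead_coeff_fib_poly[of "n - 1"] by (cases n) auto

lemma fib_poly_dvd_fib_poly_mult: "fib_poly m dvd fib_poly (m * t)"
proof (induction t)
  case (Suc t)
  show ?case
  proof (cases m)
    case (Suc l)
    then have "fib_poly (m * Suc t) = fib_poly (m * t + 1) * fib_poly (l + 1) + fib_poly (m * t) * fib_poly l"
      using fib_poly_add[of "m * t" l] by (simp add: algebra_simps)
    then show ?thesis using Suc.IH \<open>m = Suc l\<close> by simp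
  qed simp
qed simp

lemma fib_poly_dvd: "m dvd n \<Longrightarrow> fib_poly m dvd fib_poly n"
  using fib_poly_dvd_fib_poly_mult by (auto elim!: dvdE)

lemma prime_elem_dvd_fib_poly_mod:
  assumes "prime_elem q" and "q dvd fib_poly n" and "q dvd fib_poly m"
  shows "q dvd fib_poly (m mod n)"
proof (cases "m mod n = 0")
  case False
  define t r where "t = m div n" and "r = m mod n - 1"
  have "m = n * t + m mod n" by (simp add: t_def)
  then have "m = n * t + r + 1" using False by (simp add: r_def)
  then have "fib_poly m = fib_poly (n * t + 1) * fib_poly (m mod n) + fib_poly (n * t) * fib_poly r"
    using fib_poly_add[of "n * t" r] False by (simp add: r_def)
  moreover have qnt: "q dvd fib_poly (n * t)"
    using fib_poly_dvd_fib_poly_mult assms(2) dvd_trans by blast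
  ultimately have "q dvd fib_poly (n * t + 1) * fib_poly (m mod n)"
    using assms(3) by (metis dvd_add_right_iff dvd_mult2 add.commute)
  moreover have "\<not> q dvd fib_poly (n * t + 1)"
    using coprime_common_divisor[OF coprime_fib_poly_Suc _ qnt] assms(1) prime_elem_not_unit by blast
  ultimately show ?thesis using assms(1) prime_elem_dvd_mult_iff by blast
qed simp

lemma prime_elem_dvd_fib_poly_gcd:
  assumes "prime_elem q"
  shows "q dvd fib_poly m \<Longrightarrow> q dvd fib_poly n \<Longrightarrow> q dvd fib_poly (gcd m n)"
proof (induction m n rule: gcd_nat_induct)
  case (step m n)
  then show ?case
    using prime_elem_dvd_fib_poly_mod[OF assms] by (metis gcd.commute gcd_red_nat)
qed simp

definition fib_disc :: "int poly" where "fib_disc = [:4, 0, 1:]"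

lemma fib_disc_eq: "fib_disc = [:0, 1:] ^ 2 + 4"
  unfolding fib_disc_def by (simp add: power2_eq_square numeral_poly mult_pCons_left)

text \<open>The derivative identity behind squarefreeness: a repeated factor of \<open>F (n+1)\<close>
  would have to divide the constant \<open>2n+2\<close> or the coprime neighbour \<open>F n\<close>.\<close>
lemma fib_disc_pderiv_fib_poly:
  "fib_disc * pderiv (fib_poly (n + 1))
     = of_nat n * [:0, 1:] * fib_poly (n + 1) + (2 * of_nat n + 2) * fib_poly n"
proof (induction n rule: nat_less_induct)
  case (1 n)
  consider "n \<le> 1" | m where "n = m + 2"
    by (metis le_add_diff_inverse2 nat_le_linear not_less_eq_eq numeral_2_eq_2 One_nat_def)
  then show ?case
  proof cases
    case 1
    then show ?thesis
      by (cases n) (auto simp: fib_disc_def numeral_2_eq_2 pderiv_pCons mult_pCons_left numeral_poly)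
  next
    case 2
    let ?F = fib_poly
    have IH: "fib_disc * pderiv (?F (m + 1)) = of_nat m * [:0, 1:] * ?F (m + 1) + (2 * of_nat m + 2) * ?F m"
        "fib_disc * pderiv (?F (m + 2)) = (of_nat m + 1) * [:0, 1:] * ?F (m + 2) + (2 * of_nat m + 4) * ?F (m + 1)"
      using 1 2 by (auto dest!: spec[of _ m] spec[of _ "m + 1"] simp: algebra_simps)
    have r1: "?F (m + 2) = [:0, 1:] * ?F (m + 1) + ?F m" by (rule fib_poly_Suc_Suc)
    have r2: "?F (n + 1) = [:0, 1:] * ?F (m + 2) + ?F (m + 1)"
      using 2 fib_poly_Suc_Suc[of "m + 1"] by (simp add: add.assoc)
    have d: "pderiv (?F (n + 1)) = ?F (m + 2) + [:0, 1:] * pderiv (?F (m + 2)) + pderiv (?F (m + 1))"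
      unfolding r2 by (simp add: pderiv_add pderiv_mult pderiv_pCons)
    have "of_nat n = (of_nat m + 2 :: int poly)" "?F n = ?F (m + 2)" using 2 by simp_all
    then show ?thesis
      using IH r1 r2 d fib_disc_eq by algebra
  qed
qed

lemma const_dvd_monic_is_unit:
  fixes q A :: "int poly"
  assumes "lead_coeff A = 1" and "q dvd A" and "degree q = 0"
  shows "is_unit q"
proof -
  obtain r where "A = q * r" using assms(2) by (elim dvdE)
  then have "lead_coeff q * lead_coeff r = 1" using assms(1) by (simp add: lead_coeff_mult)
  then have "is_unit (lead_coeff q)" by (metis dvd_triv_left)
  then show ?thesis using assms(3) by (metis is_unit_const_poly_iff degree_0_id)
qed

lemma squarefree_fib_poly:
  assumes "n \<ge> 1"
  shows "squarefree (fib_poly n)"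
proof -
  obtain m where n: "n = m + 1" using assms by (metis le_add_diff_inverse2)
  have monic: "lead_coeff (fib_poly n) = 1" using lead_coeff_fib_poly assms by blast
  have "\<not> q ^ 2 dvd fib_poly n" if q: "prime q" for q
  proof
    assume "q ^ 2 dvd fib_poly n"
    then obtain r where r: "fib_poly n = q * q * r" by (auto simp: power2_eq_square elim: dvdE)
    then have qF: "q dvd fib_poly n" by simp
    have "pderiv (fib_poly n) = q * (q * pderiv r + 2 * r * pderiv q)"
      unfolding r by (simp add: pderiv_mult algebra_simps)
    then have "q dvd fib_disc * pderiv (fib_poly n)" by simp
    then have "q dvd of_nat m * [:0, 1:] * fib_poly n + [:2 * int m + 2:] * fib_poly m"
      using fib_disc_pderiv_fib_poly[of m] n by (simp add: of_nat_poly numeral_poly mult.commute)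
    moreover have "q dvd of_nat m * [:0, 1:] * fib_poly n" using qF by (rule dvd_mult)
    ultimately have "q dvd [:2 * int m + 2:] * fib_poly m" by (simp only: dvd_add_right_iff)
    then have "q dvd [:2 * int m + 2:] \<or> q dvd fib_poly m"
      using q prime_dvd_mult_iff by blast
    then show False
    proof
      assume "q dvd [:2 * int m + 2:]"
      then have "degree q = 0" using dvd_imp_degree_le[of q] by fastforce
      then show False using const_dvd_monic_is_unit[OF monic qF] q by simp
    next
      assume "q dvd fib_poly m"
      then show False
        using coprime_common_divisor[OF coprime_fib_poly_Suc] qF n q not_prime_unit by blast
    qed
  qed
  moreover have "fib_poly n \<noteq> 0" using monic by auto
  ultimately show ?thesis by (simp add: squarefree_factorial_semiring)
qed

lemma normalize_prod_prime_factors_squarefree: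
  fixes x :: "'a :: factorial_semiring"
  assumes "x \<noteq> 0" and "squarefree x"
  shows "normalize (\<Prod>(prime_factors x)) = normalize x"
proof -
  have "\<forall>p\<in>prime_factors x. count (prime_factorization x) p = 1"
    using assms squarefree_factorial_semiring' by (auto simp: count_prime_factorization)
  then have "\<Prod>(prime_factors x) = (\<Prod>p\<in>prime_factors x. p ^ count (prime_factorization x) p)"
    by (intro prod.cong) simp_all
  also have "\<dots> = prod_mset (prime_factorization x)" by (simp add: prod_mset_multiplicity)
  finally show ?thesis using prod_mset_prime_factorization_weak[OF assms(1)] by simp
qed

lemma normalize_monic: "lead_coeff (q :: int poly) = 1 \<Longrightarrow> normalize q = q"
  by (rule poly_eqI) simp

lemma monic_irreducible_iff_prime:
  fixes q A :: "int poly"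
  assumes "lead_coeff A = 1" and "q dvd A"
  shows "irreducible q \<and> lead_coeff q = 1 \<longleftrightarrow> prime q"
proof
  assume "irreducible q \<and> lead_coeff q = 1"
  then show "prime q" using irreducible_imp_prime_elem normalize_monic by (auto simp: prime_def)
next
  assume q: "prime q"
  obtain r where "A = q * r" using assms(2) by (elim dvdE)
  then have "lead_coeff q * lead_coeff r = 1" using assms(1) by (simp add: lead_coeff_mult)
  then have "lead_coeff q = 1 \<or> lead_coeff q = -1" using zmult_eq_1_iff by blast
  moreover have "coeff (normalize q) (degree q) = lead_coeff q" using q by (simp add: prime_def)
  ultimately have "lead_coeff q = 1" by auto
  then show "irreducible q \<and> lead_coeff q = 1" using q prime_elem_imp_irreducible by blast
qed

lemma prod_prime_factors_monic_squarefree: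
  fixes A :: "int poly"
  assumes "lead_coeff A = 1" and "squarefree A"
  shows "\<Prod>(prime_factors A) = A"
proof -
  have "lead_coeff (\<Prod>(prime_factors A)) = 1"
    using monic_irreducible_iff_prime[OF assms(1)]
    by (auto simp: lead_coeff_prod in_prime_factors_iff intro!: prod.neutral)
  moreover have "A \<noteq> 0" using assms(1) by auto
  ultimately show ?thesis
    using normalize_prod_prime_factors_squarefree[OF _ assms(2)] normalize_monic assms(1) by metis
qed

lemma prod_monic_irreducible_factors_not_dvd:
  fixes A B :: "int poly"
  assumes "lead_coeff A = 1" and "lead_coeff B = 1" and "B dvd A" and "squarefree A"
  shows "\<Prod>{q. irreducible q \<and> lead_coeff q = 1 \<and> q dvd A \<and> \<not> q dvd B} * B = A"
proof -
  have A0: "A \<noteq> 0" and B0: "B \<noteq> 0" using assms(1,2) by auto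
  have "{q. irreducible q \<and> lead_coeff q = 1 \<and> q dvd A \<and> \<not> q dvd B}
      = prime_factors A - prime_factors B"
    using monic_irreducible_iff_prime[OF assms(1)] A0 B0 by (auto simp: in_prime_factors_iff) blast
  moreover have "\<Prod>(prime_factors A) = \<Prod>(prime_factors A - prime_factors B) * \<Prod>(prime_factors B)"
    using dvd_prime_factors[OF A0 assms(3)] by (simp add: prod.subset_diff)
  ultimately show ?thesis
    using prod_prime_factors_monic_squarefree assms squarefree_mono[OF assms(3,4)] by simp
qed

lemma prime_elem_dvd_fib_poly_below_prime_power:
  assumes p: "prime p" and q: "prime_elem q"
    and "q dvd fib_poly (p ^ k)" and "q dvd fib_poly j" and "1 \<le> j" and "j < p ^ k"
  shows "q dvd fib_poly (p ^ (k - 1))"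
proof -
  obtain i where i: "i \<le> k" "gcd j (p ^ k) = p ^ i"
    using divides_primepow_nat[OF p, of "gcd j (p ^ k)" k] by auto
  have "p ^ i \<le> j" using i(2) \<open>1 \<le> j\<close> by (metis gcd_le1_nat not_one_le_zero)
  then have "p ^ i < p ^ k" using \<open>j < p ^ k\<close> by linarith
  then have "i < k" using p prime_gt_1_nat power_strict_increasing_iff by blast
  then have "fib_poly (p ^ i) dvd fib_poly (p ^ (k - 1))" by (simp add: fib_poly_dvd le_imp_power_dvd)
  moreover have "q dvd fib_poly (gcd j (p ^ k))" using prime_elem_dvd_fib_poly_gcd[OF q assms(4,3)] .
  then have "q dvd fib_poly (p ^ i)" by (simp only: i(2))
  ultimately show ?thesis by (rule dvd_trans[rotated])
qed

lemma fibotomic_prime_power: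
  assumes p: "prime p" and "k \<ge> 1"
  shows "fibotomic (p ^ k) * fib_poly (p ^ (k - 1)) = fib_poly (p ^ k)"
proof -
  let ?A = "fib_poly (p ^ k)" and ?B = "fib_poly (p ^ (k - 1))"
  have "p > 1" using p prime_gt_1_nat by blast
  then have lt: "p ^ (k - 1) < p ^ k" and ge1: "1 \<le> p ^ (k - 1)"
    using \<open>k \<ge> 1\<close> by simp_all
  have "(\<forall>j. 1 \<le> j \<and> j < p ^ k \<longrightarrow> \<not> q dvd fib_poly j) \<longleftrightarrow> \<not> q dvd ?B"
    if "irreducible q" "q dvd ?A" for q
    using prime_elem_dvd_fib_poly_below_prime_power[OF p irreducible_imp_prime_elem[OF that(1)] that(2)]
      lt ge1 by blast
  then have "{q. irreducible q \<and> lead_coeff q = 1 \<and> q dvd ?A \<and>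
                 (\<forall>j. 1 \<le> j \<and> j < p ^ k \<longrightarrow> \<not> q dvd fib_poly j)}
      = {q. irreducible q \<and> lead_coeff q = 1 \<and> q dvd ?A \<and> \<not> q dvd ?B}"
    by blast
  moreover have "\<not> p ^ k \<le> 1" using lt ge1 by linarith
  ultimately have "fibotomic (p ^ k) = \<Prod>{q. irreducible q \<and> lead_coeff q = 1 \<and> q dvd ?A \<and> \<not> q dvd ?B}"
    unfolding fibotomic_def by (simp only: if_False)
  moreover have "?B dvd ?A"
    using \<open>k \<ge> 1\<close> by (intro fib_poly_dvd le_imp_power_dvd) simp
  moreover have "1 \<le> p ^ k" using lt ge1 by linarith
  ultimately show ?thesis
    using prod_monic_irreducible_factors_not_dvd[OF lead_coeff_fib_poly lead_coeff_fib_poly _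
        squarefree_fib_poly] ge1 by presburger
qed

definition mod_cong :: "nat \<Rightarrow> 'a :: comm_ring_1 \<Rightarrow> 'a \<Rightarrow> bool" where
  "mod_cong p u v \<longleftrightarrow> of_nat p dvd u - v"

lemma mod_cong_refl [simp]: "mod_cong p u u"
  by (simp add: mod_cong_def)

lemma mod_cong_sym: "mod_cong p u v \<Longrightarrow> mod_cong p v u"
  unfolding mod_cong_def by (metis dvd_minus_iff minus_diff_eq)

lemma mod_cong_trans [trans]: "mod_cong p u v \<Longrightarrow> mod_cong p v w \<Longrightarrow> mod_cong p u w"
  unfolding mod_cong_def by (metis dvd_add diff_add_eq add_diff_cancel_left' diff_add_cancel)

lemma mod_cong_mult: "mod_cong p u v \<Longrightarrow> mod_cong p u' v' \<Longrightarrow> mod_cong p (u * u') (v * v')"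
proof -
  assume "mod_cong p u v" "mod_cong p u' v'"
  moreover have "u * u' - v * v' = (u - v) * u' + v * (u' - v')" by (simp add: algebra_simps)
  ultimately show ?thesis unfolding mod_cong_def by (simp add: dvd_add)
qed

lemma mod_cong_power: "mod_cong p u v \<Longrightarrow> mod_cong p (u ^ n) (v ^ n)"
  by (induction n) (simp_all add: mod_cong_mult)

lemma mod_cong_of_nat_mult: "mod_cong p (of_nat p * w + u) u"
  by (simp add: mod_cong_def)

lemma mod_cong_mult_cancel_right:
  assumes "prime_elem (of_nat p :: 'a :: comm_ring_1)" and "\<not> of_nat p dvd c"
    and "mod_cong p (u * c) (v * (c :: 'a))"
  shows "mod_cong p u v"
proof -
  have "of_nat p dvd (u - v) * c" using assms(3) by (simp add: mod_cong_def algebra_simps)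
  then show ?thesis using assms(1,2) prime_elem_dvd_mult_iff by (auto simp: mod_cong_def)
qed

lemma mod_cong_add_power_prime:
  fixes u v :: "'a :: comm_ring_1"
  assumes "prime p"
  shows "mod_cong p ((u + v) ^ p) (u ^ p + v ^ p)"
proof -
  have p: "0 < p" using assms prime_gt_0_nat by blast
  have "(u + v) ^ p = (\<Sum>k\<le>p. of_nat (p choose k) * u ^ k * v ^ (p - k))"
    by (rule binomial_ring)
  also have "\<dots> = (\<Sum>k\<in>{1..<p}. of_nat (p choose k) * u ^ k * v ^ (p - k)) + u ^ p + v ^ p"
  proof -
    have "{..p} = insert 0 (insert p {1..<p})" using p by auto
    then show ?thesis using p by (simp add: algebra_simps)
  qed
  finally have "(u + v) ^ p - (u ^ p + v ^ p) = (\<Sum>k\<in>{1..<p}. of_nat (p choose k) * u ^ k * v ^ (p - k))"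
    by (simp add: algebra_simps)
  moreover have "of_nat p dvd (of_nat (p choose k) :: 'a)" if "k \<in> {1..<p}" for k
  proof -
    have "p dvd p choose k" using that p assms by (intro dvd_choose_prime) auto
    then show ?thesis by (elim dvdE) simp
  qed
  ultimately show ?thesis
    unfolding mod_cong_def by (auto intro!: dvd_sum dvd_mult2)
qed

lemma mod_cong_add_power_prime_power:
  fixes u v :: "'a :: comm_ring_1"
  assumes "prime p"
  shows "mod_cong p ((u + v) ^ (p ^ k)) (u ^ (p ^ k) + v ^ (p ^ k))"
proof (induction k)
  case (Suc k)
  let ?q = "p ^ k"
  have "mod_cong p (((u + v) ^ ?q) ^ p) ((u ^ ?q + v ^ ?q) ^ p)" using Suc by (rule mod_cong_power)
  also have "mod_cong p \<dots> ((u ^ ?q) ^ p + (v ^ ?q) ^ p)" using assms by (rule mod_cong_add_power_prime)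
  finally show ?case by (simp add: power_mult[symmetric] mult.commute)
qed simp

lemma mod_cong_poly_coeff:
  "mod_cong p (f :: int poly) g \<Longrightarrow> [coeff f i = coeff g i] (mod int p)"
  unfolding mod_cong_def by (simp add: of_nat_poly const_poly_dvd_iff cong_iff_dvd_diff flip: coeff_diff)

lemma mod_cong_of_int: "mod_cong p a b \<Longrightarrow> mod_cong p (of_int a :: 'a :: comm_ring_1) (of_int b)"
  unfolding mod_cong_def by (metis dvdE dvd_triv_left of_int_diff of_int_mult of_int_of_nat_eq)

lemma two_power_prime_power_mod_cong:
  assumes "prime p" and "odd p"
  shows "mod_cong p ((2 :: int) ^ (p ^ k - 1)) 1"
proof (rule mod_cong_mult_cancel_right)
  show "prime_elem (of_nat p :: int)" using assms(1) by simp
  show "\<not> of_nat p dvd (2 :: int)"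
  proof
    assume "of_nat p dvd (2 :: int)"
    then have "p dvd 2" by (metis int_dvd_int_iff of_nat_numeral)
    then have "p \<le> 2" by (simp add: dvd_imp_le)
    then have "p = 2" using prime_ge_2_nat[OF assms(1)] by linarith
    then show False using assms(2) by simp
  qed
  have "mod_cong p ((1 + 1 :: int) ^ (p ^ k)) (1 ^ (p ^ k) + 1 ^ (p ^ k))"
    using assms(1) by (rule mod_cong_add_power_prime_power)
  moreover have "(2 :: int) ^ (p ^ k) = 2 ^ (p ^ k - 1) * 2"
  proof -
    have "p ^ k - 1 + 1 = p ^ k" using assms(1) by (simp add: prime_gt_0_nat)
    then show ?thesis by (metis power_Suc2 Suc_eq_plus1)
  qed
  ultimately show "mod_cong p (2 ^ (p ^ k - 1) * 2) (1 * (2 :: int))"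
    by (simp only: one_add_one power_one mult_1)
qed

text \<open>\<open>FibExt a b\<close> stands for \<open>a + b \<surd>(x\<^sup>2 + 4)\<close> in the quadratic extension of \<open>\<int>[x]\<close>
  that contains the roots \<open>(x \<plusminus> \<surd>(x\<^sup>2 + 4)) / 2\<close> of \<open>t\<^sup>2 - x t - 1\<close>.\<close>
datatype fib_ext = FibExt (ext_re: "int poly") (ext_im: "int poly")

instantiation fib_ext :: comm_ring_1
begin

definition "0 = FibExt 0 0"
definition "1 = FibExt 1 0"
definition "a + b = FibExt (ext_re a + ext_re b) (ext_im a + ext_im b)"
definition "a - b = FibExt (ext_re a - ext_re b) (ext_im a - ext_im b)"
definition "- a = FibExt (- ext_re a) (- ext_im a)"
definition "a * b = FibExt (ext_re a * ext_re b + fib_disc * ext_im a * ext_im b)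
                           (ext_re a * ext_im b + ext_im a * ext_re b)"

instance
  by standard (auto simp: zero_fib_ext_def one_fib_ext_def plus_fib_ext_def minus_fib_ext_def
      uminus_fib_ext_def times_fib_ext_def algebra_simps intro: fib_ext.expand)

end

lemma fib_ext_simps [simp]:
  "ext_re 0 = 0" "ext_im 0 = 0" "ext_re 1 = 1" "ext_im 1 = 0"
  "ext_re (a + b) = ext_re a + ext_re b" "ext_im (a + b) = ext_im a + ext_im b"
  "ext_re (a - b) = ext_re a - ext_re b" "ext_im (a - b) = ext_im a - ext_im b"
  "ext_re (a * b) = ext_re a * ext_re b + fib_disc * ext_im a * ext_im b"
  "ext_im (a * b) = ext_re a * ext_im b + ext_im a * ext_re b"
  by (simp_all add: zero_fib_ext_def one_fib_ext_def plus_fib_ext_def minus_fib_ext_def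
      times_fib_ext_def)

lemma of_nat_fib_ext: "of_nat n = FibExt (of_nat n) 0"
  by (induction n) (auto intro: fib_ext.expand)

lemma mod_cong_ext_im: "mod_cong p u v \<Longrightarrow> mod_cong p (ext_im u) (ext_im v)"
proof -
  assume "mod_cong p u v"
  then obtain w where "u - v = of_nat p * w" unfolding mod_cong_def by (elim dvdE)
  then have "ext_im u - ext_im v = ext_im (of_nat p * w)" by (metis fib_ext_simps)
  also have "\<dots> = of_nat p * ext_im w" by (simp add: of_nat_fib_ext)
  finally have "ext_im u - ext_im v = of_nat p * ext_im w" .
  then show ?thesis unfolding mod_cong_def by simp
qed

definition fib_root :: fib_ext where "fib_root = FibExt [:0, 1:] 1"

lemma fib_root_power_Suc_Suc:
  "fib_root ^ (n + 2) = FibExt (smult 2 [:0, 1:]) 0 * fib_root ^ (n + 1) + FibExt 4 0 * fib_root ^ n"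
proof -
  have "fib_root ^ 2 = FibExt (smult 2 [:0, 1:]) 0 * fib_root + FibExt 4 0"
    by (rule fib_ext.expand) (simp add: fib_root_def power2_eq_square fib_disc_eq mult_pCons_left numeral_poly)
  moreover have "fib_root ^ (n + 2) = fib_root ^ n * fib_root ^ 2" "fib_root ^ (n + 1) = fib_root ^ n * fib_root"
    by (simp_all only: power_add power_one_right)
  ultimately show ?thesis by (simp only: distrib_left ac_simps)
qed

text \<open>The Binet formula, cleared of denominators: \<open>fib_root\<close> is \<open>2\<close> times the root
  \<open>(x + \<surd>(x\<^sup>2 + 4)) / 2\<close>.\<close>
lemma ext_im_fib_root_power: "ext_im (fib_root ^ n) = smult (2 ^ (n - 1)) (fib_poly n)"
proof (induction n rule: fib_poly.induct)
  case (3 n)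
  have "ext_im (fib_root ^ (n + 2))
      = smult 2 [:0, 1:] * ext_im (fib_root ^ (n + 1)) + 4 * ext_im (fib_root ^ n)"
    by (simp only: fib_root_power_Suc_Suc fib_ext_simps fib_ext.sel mult_zero_left add_0_right)
  also have "\<dots> = smult 2 [:0, 1:] * smult (2 ^ n) (fib_poly (n + 1)) + 4 * smult (2 ^ (n - 1)) (fib_poly n)"
    using 3 by (simp only: Suc_eq_plus1 diff_add_inverse2)
  also have "\<dots> = smult (2 ^ (n + 1)) ([:0, 1:] * fib_poly (n + 1) + fib_poly n)"
    by (cases n) (simp_all add: smult_add_right algebra_simps numeral_poly)
  finally show ?case by (simp add: numeral_2_eq_2)
qed (simp_all add: fib_root_def)

lemma FibExt_const_power: "FibExt a 0 ^ n = FibExt (a ^ n) 0"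
  by (induction n) (auto intro: fib_ext.expand)

lemma FibExt_sqrt_power_odd: "FibExt 0 1 ^ (2 * m + 1) = FibExt 0 (fib_disc ^ m)"
  by (induction m) (auto intro: fib_ext.expand simp: power_add mult_2)

lemma fib_poly_odd_prime_power_mod_cong:
  assumes p: "prime p" "odd p"
  shows "mod_cong p (fib_poly (p ^ k)) (fib_disc ^ ((p ^ k - 1) div 2))"
proof -
  define m where "m = (p ^ k - 1) div 2"
  have N: "p ^ k = 2 * m + 1" using p(2) unfolding m_def by simp
  have root: "fib_root = FibExt [:0, 1:] 0 + FibExt 0 1" by (simp add: fib_root_def fib_ext.expand)
  have "mod_cong p (fib_root ^ p ^ k) (FibExt [:0, 1:] 0 ^ p ^ k + FibExt 0 1 ^ p ^ k)"
    unfolding root by (rule mod_cong_add_power_prime_power[OF p(1)])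
  then have "mod_cong p (ext_im (fib_root ^ p ^ k)) (ext_im (FibExt [:0, 1:] 0 ^ p ^ k + FibExt 0 1 ^ p ^ k))"
    by (rule mod_cong_ext_im)
  then have "mod_cong p (of_int (2 ^ (p ^ k - 1)) * fib_poly (p ^ k)) (fib_disc ^ m)"
    unfolding ext_im_fib_root_power N FibExt_const_power FibExt_sqrt_power_odd
    by (simp add: of_int_poly)
  moreover have "mod_cong p (of_int (2 ^ (p ^ k - 1)) :: int poly) (of_int 1)"
    using two_power_prime_power_mod_cong[OF p] by (rule mod_cong_of_int)
  then have "mod_cong p (of_int (2 ^ (p ^ k - 1)) * fib_poly (p ^ k)) (fib_poly (p ^ k))"
    using mod_cong_mult[OF _ mod_cong_refl] by fastforce
  ultimately show ?thesis
    unfolding m_def by (meson mod_cong_sym mod_cong_trans)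
qed

lemma fib_poly_double_mod_two: "mod_cong 2 (fib_poly (2 * m)) ([:0, 1:] * fib_poly m ^ 2)"
proof (cases m)
  case (Suc l)
  have "2 * m = l + (l + 1) + 1" using Suc by simp
  then have "fib_poly (2 * m) = fib_poly (l + (l + 1) + 1)" by (simp only:)
  also have "\<dots> = fib_poly (l + 1) * fib_poly (l + 2) + fib_poly l * fib_poly (l + 1)"
    using fib_poly_add[of l "l + 1"] by simp
  also have "\<dots> = of_nat 2 * (fib_poly l * fib_poly (l + 1)) + [:0, 1:] * fib_poly m ^ 2"
    using Suc fib_poly_Suc_Suc[of l] by (simp add: algebra_simps power2_eq_square)
  finally show ?thesis by (simp only: mod_cong_of_nat_mult)
qed simp

lemma fib_poly_two_power_mod_two: "mod_cong 2 (fib_poly (2 ^ k)) ([:0, 1:] ^ (2 ^ k - 1))"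
proof (induction k)
  case (Suc k)
  have "mod_cong 2 (fib_poly (2 ^ Suc k)) ([:0, 1:] * fib_poly (2 ^ k) ^ 2)"
    using fib_poly_double_mod_two[of "2 ^ k"] by simp
  also have "mod_cong 2 \<dots> ([:0, 1:] * ([:0, 1:] ^ (2 ^ k - 1)) ^ 2)"
    using Suc by (intro mod_cong_mult mod_cong_power) simp_all
  also have "[:0, 1:] * ([:0, 1:] ^ (2 ^ k - 1)) ^ 2 = ([:0, 1 :: int:] ^ (2 ^ Suc k - 1))"
  proof -
    have "1 + (2 ^ k - 1) * 2 = 2 ^ Suc k - (1 :: nat)"
      using one_le_power[of "2 :: nat" k] by (simp only: power_Suc) arith
    then show ?thesis by (metis power_mult power_add power_one_right)
  qed
  finally show ?case .
qed simp

lemma mod_cong_cofactor: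
  fixes P G H c :: "'a :: comm_ring_1"
  assumes "prime_elem (of_nat p :: 'a)" and "\<not> of_nat p dvd c" and "P * G = H"
    and "mod_cong p G (c ^ a)" and "mod_cong p H (c ^ (b + a))"
  shows "mod_cong p P (c ^ b)"
proof (rule mod_cong_mult_cancel_right)
  show "prime_elem (of_nat p :: 'a)" by fact
  show "\<not> of_nat p dvd c ^ a" using assms(1,2) prime_elem_dvd_power by blast
  have "mod_cong p (P * c ^ a) (P * G)" using mod_cong_mult[OF mod_cong_refl mod_cong_sym[OF assms(4)]] .
  also have "mod_cong p (P * G) (c ^ b * c ^ a)" using assms(3,5) by (simp add: power_add)
  finally show "mod_cong p (P * c ^ a) (c ^ b * c ^ a)" .
qed

lemma of_nat_dvd_poly_iff: "(of_nat p :: int poly) dvd f \<longleftrightarrow> (\<forall>i. int p dvd coeff f i)"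
  by (simp add: of_nat_poly const_poly_dvd_iff)

lemma prime_elem_of_nat_poly: "prime p \<Longrightarrow> prime_elem (of_nat p :: int poly)"
  by (simp add: of_nat_poly prime_elem_const_poly_iff)

lemma not_prime_dvd_monic:
  assumes "prime p" and "lead_coeff f = 1"
  shows "\<not> (of_nat p :: int poly) dvd f"
proof
  assume "of_nat p dvd f"
  then have "int p dvd 1" using assms(2) of_nat_dvd_poly_iff by metis
  then show False using assms(1) by simp
qed

lemma fibotomic_odd_prime_power_mod_cong:
  assumes p: "prime p" "odd p" and "k \<ge> 1"
  shows "mod_cong p (fibotomic (p ^ k)) (fib_disc ^ (totient (p ^ k) div 2))"
proof (rule mod_cong_cofactor)
  let ?e = "\<lambda>j. (p ^ j - 1) div 2"
  show "prime_elem (of_nat p :: int poly)" using p(1) by (rule prime_elem_of_nat_poly)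
  show "\<not> of_nat p dvd fib_disc" using p(1) by (rule not_prime_dvd_monic) (simp add: fib_disc_def)
  show "fibotomic (p ^ k) * fib_poly (p ^ (k - 1)) = fib_poly (p ^ k)"
    using p(1) \<open>k \<ge> 1\<close> by (rule fibotomic_prime_power)
  show "mod_cong p (fib_poly (p ^ (k - 1))) (fib_disc ^ ?e (k - 1))"
    using p by (rule fib_poly_odd_prime_power_mod_cong)
  have tot: "totient (p ^ k) = p ^ (k - 1) * (p - 1)"
    using p(1) \<open>k \<ge> 1\<close> by (simp add: totient_prime_power)
  have "p ^ k = p ^ (k - 1) * p" using \<open>k \<ge> 1\<close> by (simp flip: power_Suc2)
  moreover have "1 \<le> p ^ (k - 1)" and "p ^ (k - 1) \<le> p ^ (k - 1) * p"
    using prime_gt_0_nat[OF p(1)] by simp_all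
  ultimately have "p ^ k - 1 = totient (p ^ k) + (p ^ (k - 1) - 1)"
    unfolding tot diff_mult_distrib2 by linarith
  moreover have "even (totient (p ^ k))" using tot p(2) by simp
  ultimately have "?e k = totient (p ^ k) div 2 + ?e (k - 1)"
    by (simp add: div_plus_div_distrib_dvd_left)
  then show "mod_cong p (fib_poly (p ^ k)) (fib_disc ^ (totient (p ^ k) div 2 + ?e (k - 1)))"
    using fib_poly_odd_prime_power_mod_cong[OF p, of k] by simp
qed

lemma fibotomic_two_power_mod_two:
  assumes "k \<ge> 2"
  shows "mod_cong 2 (fibotomic (2 ^ k)) (fib_disc ^ (totient (2 ^ k) div 2))"
proof -
  let ?h = "2 ^ (k - 1) :: nat"
  have "mod_cong 2 (fibotomic (2 ^ k)) ([:0, 1:] ^ ?h)"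
  proof (rule mod_cong_cofactor)
    show "prime_elem (of_nat 2 :: int poly)" by (rule prime_elem_of_nat_poly) simp
    show "\<not> of_nat 2 dvd [:0, 1 :: int:]" by (rule not_prime_dvd_monic) simp_all
    show "fibotomic (2 ^ k) * fib_poly ?h = fib_poly (2 ^ k)"
      using assms by (intro fibotomic_prime_power) simp_all
    show "mod_cong 2 (fib_poly ?h) ([:0, 1:] ^ (?h - 1))" by (rule fib_poly_two_power_mod_two)
    have "2 ^ k - 1 = ?h + (?h - 1)"
      using assms by (cases k) simp_all
    then show "mod_cong 2 (fib_poly (2 ^ k)) ([:0, 1:] ^ (?h + (?h - 1)))"
      using fib_poly_two_power_mod_two[of k] by simp
  qed
  moreover have "mod_cong 2 (fib_disc ^ (totient (2 ^ k) div 2)) ([:0, 1:] ^ ?h)"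
  proof -
    have "mod_cong 2 (of_nat 2 * 2 + [:0, 1:] ^ 2) ([:0, 1:] ^ 2 :: int poly)"
      by (rule mod_cong_of_nat_mult)
    then have "mod_cong 2 fib_disc ([:0, 1:] ^ 2)" by (simp add: fib_disc_eq add.commute)
    then have "mod_cong 2 (fib_disc ^ 2 ^ (k - 2)) (([:0, 1:] ^ 2) ^ 2 ^ (k - 2))" by (rule mod_cong_power)
    moreover have "k - 1 = Suc (k - 2)" using assms by simp
    then have "totient (2 ^ k) div 2 = 2 ^ (k - 2)" and "2 * 2 ^ (k - 2) = ?h"
      using assms by (simp_all add: totient_prime_power)
    ultimately show ?thesis by (simp flip: power_mult)
  qed
  ultimately show ?thesis using mod_cong_sym mod_cong_trans by meson
qed

theorem mainTheorem11:
  fixes p k :: nat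
  assumes "prime p" and "k \<ge> 1"
  shows "if p = 2 \<and> k = 1 then fibotomic 2 = [:0, 1:]
         else (\<forall>i. [coeff (fibotomic (p ^ k)) i
                     = coeff ([:4, 0, 1:] ^ (totient (p ^ k) div 2)) i] (mod int p))"
proof (cases "p = 2 \<and> k = 1")
  case True
  then show ?thesis using fibotomic_prime_power[OF assms] by (simp add: numeral_2_eq_2)
next
  case False
  have "mod_cong p (fibotomic (p ^ k)) (fib_disc ^ (totient (p ^ k) div 2))"
  proof (cases "p = 2")
    case True
    then show ?thesis using False assms(2) fibotomic_two_power_mod_two[of k] by simp
  next
    case False
    then have "odd p" using assms(1) prime_odd_nat prime_ge_2_nat[OF assms(1)] by simp
    then show ?thesis using fibotomic_odd_prime_power_mod_cong assms by blast
  qed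
  then show ?thesis unfolding if_not_P[OF False] fib_disc_def by (blast intro: mod_cong_poly_coeff)
qed

end
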